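(* Let two probabilistically equivalent models (each one of the linear dynamic models described in the context) be written in stacked form as $$T_1x=v,\qquad T_2y=w,$$ where $x,y$ are zero-mean nonsingular Gaussian sequences over $[0,N]$, $T_1,T_2$ are nonsingular matrices determined by the model parameters, and $v,w$ are the zero-mean Gaussian vectors of dynamic noise and boundary values with nonsingular covariances $\mathrm{Cov}(v)=P_1$, $\mathrm{Cov}(w)=P_2$. If $$T_2'P_2^{-1}w=T_1'P_1^{-1}v,$$ then the two models are algebraically equivalent, i.e. $x=y$.
   Context: Sequences are indexed by $[0,N]=(0,1,\ldots,N)$, $x_k\in\mathbb{R}^d$, $'$ denotes transpose. The models considered are linear dynamic models of the following types: forward/backward Markov, reciprocal ($R^0_kx_k-R^-_kx_{k-1}-R^+_kx_{k+1}=e^R_k$ plus boundary equations), and forward/backward $CM_L$ and $CM_F$ models ($x_k=G_{k,k-1}x_{k-1}+G_{k,c}x_c+e_k$, $c\in\{0,N\}$, plus boundary equations); each such model with its boundary condition can be written as $Tx=v$, $T$ nonsingular, $v$ stacking the dynamic noise and boundary values. Two models $T_1x=v$, $T_2y=w$ are probabilistically equivalent (PE) if $x$ and $y$ have the same distribution (equivalently $T_2'P_2^{-1}T_2=T_1'P_1^{-1}T_1$), and algebraically equivalent (AE) if $x=y$ (path-wise). *)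

theory Defs
  imports "HOL-Probability.Probability"
begin

text \<open>Characterised via
  Cramer-Wold: every nontrivial linear functional a . X is N(0, a' C a).\<close>
definition zm_gaussian :: "'a measure \<Rightarrow> ('a \<Rightarrow> real^'n) \<Rightarrow> real^'n^'n \<Rightarrow> bool" where
  "zm_gaussian M X C \<longleftrightarrow>
     X \<in> borel_measurable M \<and> transpose C = C \<and>
     (\<forall>a::real^'n. a \<noteq> 0 \<longrightarrow>
        0 < a \<bullet> (C *v a) \<and>
        distr M lborel (\<lambda>\<omega>. a \<bullet> X \<omega>) = density lborel (normal_density 0 (sqrt (a \<bullet> (C *v a)))))"

definition prob_equiv :: "'a measure \<Rightarrow> ('a \<Rightarrow> real^'n) \<Rightarrow> ('a \<Rightarrow> real^'n) \<Rightarrow> bool" where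
  "prob_equiv M x y \<longleftrightarrow> distr M borel x = distr M borel y"

end

theory Submission
  imports Defs
begin

text \<open>The stacked equation \<open>T x = v\<close> exhibits \<open>x\<close> as the linear image \<open>T\<^sup>-\<^sup>1 v\<close>, so \<open>x\<close> is Gaussian
  with covariance \<open>C\<^sub>1 = T\<^sub>1\<^sup>-\<^sup>1 P\<^sub>1 T\<^sub>1\<^sup>-\<^sup>T\<close>, whose inverse is the information matrix
  \<open>T\<^sub>1' P\<^sub>1\<^sup>-\<^sup>1 T\<^sub>1\<close>; hence \<open>x = C\<^sub>1 T\<^sub>1' P\<^sub>1\<^sup>-\<^sup>1 v\<close>, and likewise \<open>y = C\<^sub>2 T\<^sub>2' P\<^sub>2\<^sup>-\<^sup>1 w\<close>.
  Probabilistic equivalence forces \<open>C\<^sub>1 = C\<^sub>2\<close>: every projection \<open>a \<bullet> x\<close> has the same law as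
  \<open>a \<bullet> y\<close>, so the variances \<open>a' C\<^sub>1 a\<close> and \<open>a' C\<^sub>2 a\<close> agree, and a symmetric matrix is determined
  by its quadratic form.  The hypothesis \<open>T\<^sub>2' P\<^sub>2\<^sup>-\<^sup>1 w = T\<^sub>1' P\<^sub>1\<^sup>-\<^sup>1 v\<close> then gives \<open>x = y\<close> pathwise.\<close>

lemma matrix_mul_matrix_inv:
  fixes A :: "real^'n^'n"
  assumes "invertible A"
  shows "A ** matrix_inv A = mat 1"
  using someI_ex[OF assms[unfolded invertible_def]] unfolding matrix_inv_def by blast

lemma matrix_inv_matrix_mul:
  fixes A :: "real^'n^'n"
  assumes "invertible A"
  shows "matrix_inv A ** A = mat 1"
  using someI_ex[OF assms[unfolded invertible_def]] unfolding matrix_inv_def by blast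

lemma invertible_matrix_inv:
  fixes A :: "real^'n^'n"
  assumes "invertible A"
  shows "invertible (matrix_inv A)"
  unfolding invertible_def
  using matrix_mul_matrix_inv[OF assms] matrix_inv_matrix_mul[OF assms] by blast

lemma left_inverse_solve:
  fixes L T :: "real^'n^'n"
  assumes "L ** T = mat 1" and "T *v x = v"
  shows "x = L *v v"
  using assms by (metis matrix_vector_mul_assoc matrix_vector_mul_lid)

lemma symmetric_inner_matrix_vector_commute:
  fixes D :: "real^'n^'n"
  assumes "transpose D = D"
  shows "b \<bullet> (D *v a) = a \<bullet> (D *v b)"
  by (metis assms dot_lmul_matrix inner_commute vector_transpose_matrix)

lemma symmetric_matrix_eqI_quadratic_form:
  fixes C1 C2 :: "real^'n^'n"
  assumes "transpose C1 = C1" and "transpose C2 = C2"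
    and "\<And>a. a \<bullet> (C1 *v a) = a \<bullet> (C2 *v a)"
  shows "C1 = C2"
proof -
  define D where "D = C1 - C2"
  have D_sym: "transpose D = D"
    using assms(1,2) unfolding D_def by (simp add: transpose_def vec_eq_iff)
  have D_form: "a \<bullet> (D *v a) = 0" for a
    using assms(3)[of a] unfolding D_def by (simp add: matrix_vector_mult_diff_rdistrib inner_diff_right)
  have "D *v b = 0" for b
  proof -
    define a where "a = D *v b"
    \<comment> \<open>polarization: expand the vanishing form at \<open>a + b\<close>\<close>
    have "(a + b) \<bullet> (D *v (a + b)) = 0" by (rule D_form)
    then have "a \<bullet> (D *v a) + a \<bullet> (D *v b) + b \<bullet> (D *v a) + b \<bullet> (D *v b) = 0"
      by (simp add: matrix_vector_right_distrib inner_add_left inner_add_right)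
    then have "a \<bullet> a = 0"
      using D_form[of a] D_form[of b] symmetric_inner_matrix_vector_commute[OF D_sym, of b a]
      unfolding a_def by simp
    then show ?thesis unfolding a_def by simp
  qed
  then have "D = 0" by (simp add: matrix_eq)
  then show ?thesis unfolding D_def by simp
qed

lemma symmetric_congruence:
  fixes S P :: "real^'n^'n"
  assumes "transpose P = P"
  shows "transpose (S ** P ** transpose S) = S ** P ** transpose S"
  using assms by (simp add: matrix_transpose_mul matrix_mul_assoc)

lemma matrix_inv_congruence_left_inverse:
  fixes T P :: "real^'n^'n"
  assumes "invertible T" and "invertible P"
  shows "(matrix_inv T ** P ** transpose (matrix_inv T)) ** (transpose T ** matrix_inv P) ** T = mat 1"
proof -
  define S where "S = matrix_inv T"
  have ST: "transpose S ** transpose T = mat 1"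
    using matrix_mul_matrix_inv[OF assms(1)] unfolding S_def by (metis matrix_transpose_mul transpose_mat)
  have "(S ** P ** transpose S) ** (transpose T ** matrix_inv P) ** T
      = S ** P ** (transpose S ** transpose T) ** matrix_inv P ** T"
    by (simp add: matrix_mul_assoc)
  also have "\<dots> = S ** (P ** matrix_inv P) ** T"
    by (simp add: ST matrix_mul_assoc)
  also have "\<dots> = S ** T"
    by (simp add: matrix_mul_matrix_inv[OF assms(2)])
  also have "\<dots> = mat 1"
    unfolding S_def by (rule matrix_inv_matrix_mul[OF assms(1)])
  finally show ?thesis unfolding S_def .
qed

lemma integral_normal_density_square:
  fixes \<sigma> :: real
  assumes "0 < \<sigma>"
  shows "integral\<^sup>L (density lborel (normal_density 0 \<sigma>)) (\<lambda>t. t\<^sup>2) = \<sigma>\<^sup>2"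
proof -
  have "integral\<^sup>L (density lborel (normal_density 0 \<sigma>)) (\<lambda>t. t\<^sup>2)
      = integral\<^sup>L lborel (\<lambda>t. normal_density 0 \<sigma> t * (t - 0) ^ (2 * 1))"
    by (subst integral_density) auto
  also have "\<dots> = \<sigma>\<^sup>2"
    using assms by (subst integral_normal_moment_even) (auto simp: numeral_2_eq_2)
  finally show ?thesis .
qed

lemma density_normal_density_std_dev_unique:
  fixes \<sigma> \<tau> :: real
  assumes "0 < \<sigma>" and "0 < \<tau>"
    and "density lborel (normal_density 0 \<sigma>) = density lborel (normal_density 0 \<tau>)"
  shows "\<sigma> = \<tau>"
proof -
  have "\<sigma>\<^sup>2 = \<tau>\<^sup>2"
    using assms by (metis integral_normal_density_square)
  then show ?thesis
    using assms(1,2) by (simp add: power2_eq_iff_nonneg)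
qed

lemma zm_gaussian_invertible:
  assumes "zm_gaussian M v P"
  shows "invertible P"
proof -
  have "\<forall>a. P *v a = 0 \<longrightarrow> a = 0"
    using assms unfolding zm_gaussian_def by force
  then show ?thesis
    unfolding invertible_left_inverse matrix_left_invertible_ker[symmetric] .
qed

lemma zm_gaussian_linear_image:
  fixes S P :: "real^'n^'n"
  assumes "zm_gaussian M v P" and "invertible S"
    and x_eq: "\<forall>\<omega>\<in>space M. x \<omega> = S *v v \<omega>"
  shows "zm_gaussian M x (S ** P ** transpose S)"
  unfolding zm_gaussian_def
proof (intro conjI allI impI)
  have "(\<lambda>\<omega>. S *v v \<omega>) \<in> borel_measurable M"
    using assms(1) borel_measurable_continuous_onI[OF matrix_vector_mult_linear_continuous_on]
    unfolding zm_gaussian_def by (blast intro: measurable_compose)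
  then show "x \<in> borel_measurable M"
    using x_eq measurable_cong by (metis (no_types, lifting))
  show "transpose (S ** P ** transpose S) = S ** P ** transpose S"
    using assms(1) unfolding zm_gaussian_def by (blast intro: symmetric_congruence)
next
  fix a :: "real^'n"
  assume "a \<noteq> 0"
  define b where "b = transpose S *v a"
  have "b \<noteq> 0"
  proof
    assume "b = 0"
    obtain L where "L ** transpose S = mat 1"
      using transpose_invertible[OF assms(2)] unfolding invertible_def by blast
    then have "a = L *v b"
      unfolding b_def by (rule left_inverse_solve) simp
    then show False
      using \<open>a \<noteq> 0\<close> \<open>b = 0\<close> by simp
  qed
  then have b_gauss: "0 < b \<bullet> (P *v b)"
      "distr M lborel (\<lambda>\<omega>. b \<bullet> v \<omega>) = density lborel (normal_density 0 (sqrt (b \<bullet> (P *v b))))"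
    using assms(1) unfolding zm_gaussian_def by auto
  have b_form: "b \<bullet> (P *v b) = a \<bullet> ((S ** P ** transpose S) *v a)"
    unfolding b_def by (metis dot_lmul_matrix matrix_vector_mul_assoc transpose_matrix_vector)
  have "distr M lborel (\<lambda>\<omega>. a \<bullet> x \<omega>) = distr M lborel (\<lambda>\<omega>. b \<bullet> v \<omega>)"
    by (rule distr_cong) (simp_all add: x_eq b_def dot_lmul_matrix)
  then show "distr M lborel (\<lambda>\<omega>. a \<bullet> x \<omega>)
      = density lborel (normal_density 0 (sqrt (a \<bullet> ((S ** P ** transpose S) *v a))))"
    using b_gauss b_form by simp
  show "0 < a \<bullet> ((S ** P ** transpose S) *v a)"
    using b_gauss b_form by simp
qed

lemma zm_gaussian_solution:
  fixes T P :: "real^'n^'n"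
  assumes "invertible T" and "zm_gaussian M v P" and "\<forall>\<omega>\<in>space M. T *v x \<omega> = v \<omega>"
  shows "zm_gaussian M x (matrix_inv T ** P ** transpose (matrix_inv T))"
proof (rule zm_gaussian_linear_image[OF assms(2) invertible_matrix_inv[OF assms(1)]])
  show "\<forall>\<omega>\<in>space M. x \<omega> = matrix_inv T *v v \<omega>"
    using assms(3) left_inverse_solve[OF matrix_inv_matrix_mul[OF assms(1)]] by blast
qed

lemma prob_equiv_distr_inner:
  fixes x y :: "'a \<Rightarrow> real^'n"
  assumes "prob_equiv M x y" and "x \<in> borel_measurable M" and "y \<in> borel_measurable M"
  shows "distr M lborel (\<lambda>\<omega>. a \<bullet> x \<omega>) = distr M lborel (\<lambda>\<omega>. a \<bullet> y \<omega>)"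
proof -
  have inner_meas: "(\<lambda>z::real^'n. a \<bullet> z) \<in> borel \<rightarrow>\<^sub>M lborel" by simp
  have "distr M lborel (\<lambda>\<omega>. a \<bullet> x \<omega>) = distr (distr M borel x) lborel (\<lambda>z. a \<bullet> z)"
    using distr_distr[OF inner_meas assms(2)] by (simp add: comp_def)
  also have "\<dots> = distr (distr M borel y) lborel (\<lambda>z. a \<bullet> z)"
    using assms(1) unfolding prob_equiv_def by simp
  also have "\<dots> = distr M lborel (\<lambda>\<omega>. a \<bullet> y \<omega>)"
    using distr_distr[OF inner_meas assms(3)] by (simp add: comp_def)
  finally show ?thesis .
qed

lemma zm_gaussian_prob_equiv_covariance_unique:
  fixes x y :: "'a \<Rightarrow> real^'n" and C1 C2 :: "real^'n^'n"
  assumes "zm_gaussian M x C1" and "zm_gaussian M y C2" and "prob_equiv M x y"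
  shows "C1 = C2"
proof (rule symmetric_matrix_eqI_quadratic_form)
  show "transpose C1 = C1" "transpose C2 = C2"
    using assms(1,2) unfolding zm_gaussian_def by auto
  fix a :: "real^'n"
  show "a \<bullet> (C1 *v a) = a \<bullet> (C2 *v a)"
  proof (cases "a = 0")
    case False
    then have pos: "0 < a \<bullet> (C1 *v a)" "0 < a \<bullet> (C2 *v a)"
      using assms(1,2) unfolding zm_gaussian_def by auto
    have "distr M lborel (\<lambda>\<omega>. a \<bullet> x \<omega>) = distr M lborel (\<lambda>\<omega>. a \<bullet> y \<omega>)"
      using assms unfolding zm_gaussian_def by (blast intro: prob_equiv_distr_inner)
    then have "density lborel (normal_density 0 (sqrt (a \<bullet> (C1 *v a))))
        = density lborel (normal_density 0 (sqrt (a \<bullet> (C2 *v a))))"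
      using False assms(1,2) unfolding zm_gaussian_def by metis
    then have "sqrt (a \<bullet> (C1 *v a)) = sqrt (a \<bullet> (C2 *v a))"
      using pos by (intro density_normal_density_std_dev_unique) auto
    then show ?thesis by simp
  qed simp
qed

theorem proposition2:
  fixes M :: "'a measure"
    and x y v w :: "'a \<Rightarrow> real^'n"
    and T1 T2 P1 P2 :: "real^'n^'n"
  assumes "prob_space M"
    and "invertible T1" and "invertible T2"
    and "\<exists>Cx. zm_gaussian M x Cx" and "\<exists>Cy. zm_gaussian M y Cy"
    and "zm_gaussian M v P1" and "zm_gaussian M w P2"
    and "\<forall>\<omega>\<in>space M. T1 *v x \<omega> = v \<omega>"
    and "\<forall>\<omega>\<in>space M. T2 *v y \<omega> = w \<omega>"
    and "prob_equiv M x y"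
    and "\<forall>\<omega>\<in>space M. (transpose T2 ** matrix_inv P2) *v w \<omega> = (transpose T1 ** matrix_inv P1) *v v \<omega>"
  shows "\<forall>\<omega>\<in>space M. x \<omega> = y \<omega>"
proof
  fix \<omega> assume \<omega>: "\<omega> \<in> space M"
  define C1 where "C1 = matrix_inv T1 ** P1 ** transpose (matrix_inv T1)"
  define C2 where "C2 = matrix_inv T2 ** P2 ** transpose (matrix_inv T2)"
  have "C1 = C2"
    using zm_gaussian_solution[OF assms(2,6,8)] zm_gaussian_solution[OF assms(3,7,9)] assms(10)
    unfolding C1_def C2_def by (rule zm_gaussian_prob_equiv_covariance_unique)
  have "x \<omega> = (C1 ** (transpose T1 ** matrix_inv P1)) *v v \<omega>"
    using matrix_inv_congruence_left_inverse[OF assms(2) zm_gaussian_invertible[OF assms(6)]] assms(8) \<omega>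
    unfolding C1_def by (blast intro: left_inverse_solve)
  also have "\<dots> = (C2 ** (transpose T2 ** matrix_inv P2)) *v w \<omega>"
    using assms(11) \<omega> \<open>C1 = C2\<close> by (simp add: matrix_vector_mul_assoc[symmetric])
  also have "\<dots> = y \<omega>"
    using matrix_inv_congruence_left_inverse[OF assms(3) zm_gaussian_invertible[OF assms(7)]] assms(9) \<omega>
    unfolding C2_def by (metis left_inverse_solve)
  finally show "x \<omega> = y \<omega>" .
qed

end
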